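(* Let $G$ be a connected graph with $n$ vertices and $m$ edges. If $n\ge 15$ and $n+8\le m\le \min\{2n^{3/2},\binom{n}{2}\}$, then $\frac{q(G)}{R(G)}<\frac{n}{\sqrt{n-1}}$.
   Context: All graphs are finite and simple. For a vertex $u$, $d(u)$ is its degree. The Randić index is $R(G)=\sum_{\{u,v\}\in E(G)} \frac{1}{\sqrt{d(u)d(v)}}$. The signless Laplacian is $Q=D+A$ ($D$ the diagonal degree matrix, $A$ the adjacency matrix), and $q(G)$ is its largest eigenvalue. *)

theory Defs
  imports "HOL-Analysis.Analysis"
begin

definition simple_graph :: "('a::finite \<Rightarrow> 'a \<Rightarrow> bool) \<Rightarrow> bool" where
  "simple_graph E \<longleftrightarrow> (\<forall>u v. E u v \<longrightarrow> E v u) \<and> (\<forall>u. \<not> E u u)"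

definition connected_graph :: "('a::finite \<Rightarrow> 'a \<Rightarrow> bool) \<Rightarrow> bool" where
  "connected_graph E \<longleftrightarrow> (\<forall>u v. E\<^sup>*\<^sup>* u v)"

definition edges :: "('a \<Rightarrow> 'a \<Rightarrow> bool) \<Rightarrow> 'a set set" where
  "edges E = {{u, v} | u v. E u v}"

definition deg :: "('a::finite \<Rightarrow> 'a \<Rightarrow> bool) \<Rightarrow> 'a \<Rightarrow> nat" where
  "deg E u = card {v. E u v}"

definition randic :: "('a::finite \<Rightarrow> 'a \<Rightarrow> bool) \<Rightarrow> real" where
  "randic E = (\<Sum>e\<in>edges E. 1 / sqrt (\<Prod>x\<in>e. real (deg E x)))"

definition signless_laplacian :: "('a::finite \<Rightarrow> 'a \<Rightarrow> bool) \<Rightarrow> real^'a^'a" where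
  "signless_laplacian E = (\<chi> i j. (if i = j then real (deg E i) else 0) + (if E i j then 1 else 0))"

definition eigenvalues :: "real^'n^'n \<Rightarrow> real set" where
  "eigenvalues M = {c. \<exists>v. v \<noteq> 0 \<and> M *v v = c *\<^sub>R v}"

text \<open>q(G): largest eigenvalue of Q (Q is real symmetric, so all eigenvalues are real).\<close>
definition q_index :: "('a::finite \<Rightarrow> 'a \<Rightarrow> bool) \<Rightarrow> real" where
  "q_index E = Max (eigenvalues (signless_laplacian E))"

end

theory Submission
  imports Defs
begin

text \<open>Write \<open>k = n - 1\<close> and \<open>C = 2m - k\<close>, and let \<open>t\<^sub>u\<close> be the 2-degree of \<open>u\<close>, the sum of the
degrees of its neighbours. Since every vertex outside the closed neighbourhood of \<open>u\<close> has degree at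
least one, \<open>t\<^sub>u \<le> C\<close>; also \<open>t\<^sub>u \<le> d\<^sub>u k\<close>. Comparing an eigenvector of \<open>Q\<close> at the vertex where
\<open>|x\<^sub>u| / d\<^sub>u\<close> is maximal gives \<open>q \<le> max\<^sub>u (d\<^sub>u + t\<^sub>u / d\<^sub>u) \<le> C/k + k\<close>. On the other hand
\<open>\<Sum>\<^sub>u\<^sub>v d\<^sub>u d\<^sub>v = \<Sum>\<^sub>u d\<^sub>u t\<^sub>u / 2 \<le> C m\<close>, so the tangent line of \<open>1/\<surd>w\<close> at \<open>w = C\<close> yields
\<open>R \<ge> m / \<surd>C\<close>. What remains, \<open>(C/k + k) \<surd>C / m < (k + 1) / \<surd>k\<close>, is a polynomial inequality
in \<open>k\<close> and \<open>m\<close>; it holds for \<open>k \<ge> 14\<close> and \<open>k + 9 \<le> m \<le> k (k + 1) / 2\<close>.\<close>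

subsection \<open>Eigenvalues of real symmetric matrices\<close>

lemma inner_symmetric_matrix:
  fixes M :: "real^'n^'n"
  assumes "transpose M = M"
  shows "(M *v x) \<bullet> y = x \<bullet> (M *v y)"
  by (metis assms dot_lmul_matrix vector_transpose_matrix)

lemma finite_eigenvalues_symmetric:
  fixes M :: "real^'n^'n"
  assumes sym: "transpose M = M"
  shows "finite (eigenvalues M)"
proof -
  define v where "v c = (SOME v. v \<noteq> 0 \<and> M *v v = c *\<^sub>R v)" for c
  have v: "v c \<noteq> 0 \<and> M *v v c = c *\<^sub>R v c" if "c \<in> eigenvalues M" for c
    unfolding v_def by (rule someI_ex) (use that in \<open>simp add: eigenvalues_def\<close>)
  have orthogonal: "v a \<bullet> v b = 0" if "a \<in> eigenvalues M" "b \<in> eigenvalues M" "a \<noteq> b" for a b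
  proof -
    have "a * (v a \<bullet> v b) = (M *v v a) \<bullet> v b" using v[OF that(1)] by simp
    also have "\<dots> = v a \<bullet> (M *v v b)" by (rule inner_symmetric_matrix[OF sym])
    also have "\<dots> = b * (v a \<bullet> v b)" using v[OF that(2)] by simp
    finally show ?thesis using \<open>a \<noteq> b\<close> by simp
  qed
  have inj: "inj_on v (eigenvalues M)"
    by (rule inj_onI) (metis orthogonal v inner_eq_zero_iff)
  have "pairwise orthogonal (v ` eigenvalues M)"
    unfolding pairwise_def orthogonal_def using orthogonal by blast
  moreover have "0 \<notin> v ` eigenvalues M" using v by auto
  ultimately have "independent (v ` eigenvalues M)"
    by (rule pairwise_orthogonal_independent)
  then show ?thesis
    using independent_imp_finite finite_imageD[OF _ inj] by blast
qed

lemma quadratic_nonpos_imp_linear_coeff_zero: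
  fixes a b :: real
  assumes "\<And>t. 2 * t * a + t\<^sup>2 * b \<le> 0"
  shows "a = 0"
proof (rule ccontr)
  assume "a \<noteq> 0"
  define c where "c = \<bar>b\<bar> + 1"
  have "c > 0" by (simp add: c_def add_nonneg_pos)
  have "c\<^sup>2 * (2 * (a / c) * a + (a / c)\<^sup>2 * b) = a\<^sup>2 * (2 * c + b)"
    using \<open>c > 0\<close> by (simp add: field_simps power2_eq_square)
  also have "\<dots> > 0" using \<open>a \<noteq> 0\<close> by (simp add: c_def)
  finally show False
    using assms[of "a / c"] \<open>c > 0\<close> by (smt (verit) zero_le_power2 mult_nonneg_nonpos)
qed

text \<open>The bound at \<open>x + t y\<close> is a quadratic inequality in \<open>t\<close> with linear coefficient
\<open>2 y \<bullet> (M x - l x)\<close>.\<close>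

lemma rayleigh_maximiser_eigenvector:
  fixes M :: "real^'n^'n"
  assumes sym: "transpose M = M"
    and bound: "\<And>y. y \<bullet> (M *v y) \<le> l * (y \<bullet> y)"
    and attained: "x \<bullet> (M *v x) = l * (x \<bullet> x)"
  shows "M *v x = l *\<^sub>R x"
proof -
  have "y \<bullet> (M *v x - l *\<^sub>R x) = 0" for y
  proof (rule quadratic_nonpos_imp_linear_coeff_zero)
    fix t
    have "(x + t *\<^sub>R y) \<bullet> (M *v (x + t *\<^sub>R y)) \<le> l * ((x + t *\<^sub>R y) \<bullet> (x + t *\<^sub>R y))"
      by (rule bound)
    moreover have "x \<bullet> (M *v y) = y \<bullet> (M *v x)"
      using inner_symmetric_matrix[OF sym, of y x] by (simp add: inner_commute)
    ultimately show "2 * t * (y \<bullet> (M *v x - l *\<^sub>R x)) + t\<^sup>2 * (y \<bullet> (M *v y) - l * (y \<bullet> y)) \<le> 0"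
      using attained
      by (simp add: matrix_vector_right_distrib matrix_vector_mult_scaleR inner_add_left
          inner_add_right inner_diff_right inner_commute power2_eq_square algebra_simps)
  qed
  from this[of "M *v x - l *\<^sub>R x"] show ?thesis by simp
qed

lemma eigenvalues_symmetric_nonempty:
  fixes M :: "real^'n^'n"
  assumes sym: "transpose M = M"
  shows "eigenvalues M \<noteq> {}"
proof -
  define f where "f y = y \<bullet> (M *v y)" for y :: "real^'n"
  have "continuous_on (sphere 0 1) f"
    unfolding f_def by (intro continuous_on_inner continuous_on_id matrix_vector_mult_linear_continuous_on)
  moreover have "sphere (0::real^'n) 1 \<noteq> {}" by (simp add: sphere_eq_empty)
  ultimately obtain x where x: "x \<in> sphere 0 1" and max: "\<And>y. y \<in> sphere 0 1 \<Longrightarrow> f y \<le> f x"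
    using continuous_attains_sup[OF compact_sphere] by blast
  have "f y \<le> f x * (y \<bullet> y)" for y
  proof (cases "y = 0")
    case False
    have "f (inverse (norm y) *\<^sub>R y) \<le> f x" using False by (intro max) simp
    then show ?thesis
      using False by (simp add: f_def matrix_vector_mult_scaleR field_simps power2_norm_eq_inner [symmetric] power2_eq_square)
  qed (simp add: f_def)
  moreover have "x \<bullet> x = 1" using x by (simp add: norm_eq_1)
  ultimately have "M *v x = f x *\<^sub>R x"
    by (intro rayleigh_maximiser_eigenvector[OF sym]) (simp_all add: f_def)
  moreover have "x \<noteq> 0" using x by auto
  ultimately show ?thesis unfolding eigenvalues_def by blast
qed

subsection \<open>Degrees\<close>

definition two_degree :: "('a::finite \<Rightarrow> 'a \<Rightarrow> bool) \<Rightarrow> 'a \<Rightarrow> real" where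
  "two_degree E u = (\<Sum>v\<in>{v. E u v}. real (deg E v))"

lemma deg_ge_1_if_connected:
  fixes E :: "'a::finite \<Rightarrow> 'a \<Rightarrow> bool"
  assumes "connected_graph E" and "CARD('a) \<ge> 2"
  shows "deg E u \<ge> 1"
proof -
  obtain v :: 'a where "v \<noteq> u" using assms(2) by (metis card_2_iff' ex_card)
  moreover have "E\<^sup>*\<^sup>* u v" using assms(1) by (simp add: connected_graph_def)
  ultimately have "{v. E u v} \<noteq> {}" by (metis converse_rtranclpE empty_Collect_eq)
  then show ?thesis unfolding deg_def by (simp add: Suc_leI card_gt_0_iff)
qed

lemma deg_le_card_minus_1:
  fixes E :: "'a::finite \<Rightarrow> 'a \<Rightarrow> bool"
  assumes "simple_graph E"
  shows "real (deg E u) \<le> real CARD('a) - 1"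
proof -
  have "{v. E u v} \<subseteq> UNIV - {u}" using assms by (auto simp: simple_graph_def)
  then have "deg E u \<le> CARD('a) - 1"
    unfolding deg_def by (metis card_mono card_Diff_singleton finite UNIV_I)
  moreover have "CARD('a) \<ge> 1" by (simp add: Suc_leI)
  ultimately show ?thesis by linarith
qed

lemma sum_arcs_eq_twice_sum_edges:
  fixes E :: "'a::finite \<Rightarrow> 'a \<Rightarrow> bool" and g :: "'a \<Rightarrow> 'a \<Rightarrow> real"
  assumes sg: "simple_graph E" and g_f: "\<And>u v. E u v \<Longrightarrow> g u v = f {u, v}"
  shows "(\<Sum>u\<in>UNIV. \<Sum>v\<in>{v. E u v}. g u v) = 2 * (\<Sum>e\<in>edges E. f e)"
proof -
  define P where "P = Sigma UNIV (\<lambda>u. {v. E u v})"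
  define h where "h p = {fst p, snd p}" for p :: "'a \<times> 'a"
  have "(\<Sum>u\<in>UNIV. \<Sum>v\<in>{v. E u v}. g u v) = (\<Sum>(u, v)\<in>P. g u v)"
    unfolding P_def by (simp add: sum.Sigma)
  also have "\<dots> = (\<Sum>e\<in>h ` P. \<Sum>p\<in>{p\<in>P. h p = e}. case_prod g p)"
    by (rule sum.image_gen) (simp add: P_def)
  also have "\<dots> = (\<Sum>e\<in>h ` P. 2 * f e)"
  proof (rule sum.cong[OF refl])
    fix e assume "e \<in> h ` P"
    then obtain a b where ab: "E a b" "e = {a, b}" unfolding P_def h_def by auto
    then have "a \<noteq> b" "E b a" using sg by (auto simp: simple_graph_def)
    then have "{p\<in>P. h p = e} = {(a, b), (b, a)}"
      using ab by (auto simp: P_def h_def doubleton_eq_iff)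
    then show "(\<Sum>p\<in>{p\<in>P. h p = e}. case_prod g p) = 2 * f e"
      using \<open>a \<noteq> b\<close> \<open>E b a\<close> ab g_f by (simp add: insert_commute)
  qed
  also have "h ` P = edges E" unfolding edges_def h_def P_def image_def by auto
  finally show ?thesis by (simp add: sum_distrib_left)
qed

lemma sum_deg_eq_twice_card_edges:
  fixes E :: "'a::finite \<Rightarrow> 'a \<Rightarrow> bool"
  assumes "simple_graph E"
  shows "(\<Sum>u\<in>UNIV. real (deg E u)) = 2 * real (card (edges E))"
  using sum_arcs_eq_twice_sum_edges[OF assms, of "\<lambda>_ _. 1" "\<lambda>_. 1"] by (simp add: deg_def)

lemma two_degree_le_edges:
  fixes E :: "'a::finite \<Rightarrow> 'a \<Rightarrow> bool"
  assumes sg: "simple_graph E" and cg: "connected_graph E" and n2: "CARD('a) \<ge> 2"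
  shows "two_degree E u \<le> 2 * real (card (edges E)) - (real CARD('a) - 1)"
proof -
  define N where "N = {v. E u v}"
  define A where "A = UNIV - insert u N"
  have "u \<notin> N" using sg by (auto simp: N_def simple_graph_def)
  then have "UNIV = N \<union> insert u A" "N \<inter> insert u A = {}" "u \<notin> A"
    unfolding A_def by auto
  then have "(\<Sum>w\<in>UNIV. real (deg E w)) = (\<Sum>w\<in>N. real (deg E w)) + (\<Sum>w\<in>insert u A. real (deg E w))"
    by (metis finite sum.union_disjoint)
  then have split: "(\<Sum>w\<in>UNIV. real (deg E w)) = two_degree E u + real (deg E u) + (\<Sum>w\<in>A. real (deg E w))"
    using \<open>u \<notin> A\<close> by (simp add: two_degree_def N_def)
  have "real (card A) \<le> (\<Sum>w\<in>A. real (deg E w))"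
    using sum_mono[of A "\<lambda>_. 1" "\<lambda>w. real (deg E w)"] deg_ge_1_if_connected[OF cg n2] by simp
  moreover have "card A = CARD('a) - (deg E u + 1)"
    using \<open>u \<notin> N\<close> unfolding A_def by (simp add: card_Diff_subset N_def deg_def)
  moreover have "deg E u + 1 \<le> CARD('a)"
    using deg_le_card_minus_1[OF sg, of u] by linarith
  ultimately show ?thesis
    using split sum_deg_eq_twice_card_edges[OF sg] by (simp add: of_nat_diff)
qed

lemma two_degree_le_deg_mult:
  fixes E :: "'a::finite \<Rightarrow> 'a \<Rightarrow> bool"
  assumes "simple_graph E"
  shows "two_degree E u \<le> real (deg E u) * (real CARD('a) - 1)"
  using sum_mono[of "{v. E u v}", OF deg_le_card_minus_1[OF assms]]
  by (simp add: two_degree_def deg_def)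

subsection \<open>The signless Laplacian index\<close>

lemma transpose_signless_laplacian:
  assumes "simple_graph E"
  shows "transpose (signless_laplacian E) = signless_laplacian E"
  using assms by (auto simp: transpose_def signless_laplacian_def vec_eq_iff simple_graph_def)

lemma signless_laplacian_mult_vec_nth:
  fixes E :: "'a::finite \<Rightarrow> 'a \<Rightarrow> bool"
  shows "(signless_laplacian E *v x) $ u = real (deg E u) * x $ u + (\<Sum>v\<in>{v. E u v}. x $ v)"
proof -
  have "(signless_laplacian E *v x) $ u =
      (\<Sum>j\<in>UNIV. (if u = j then real (deg E u) * x $ j else 0) + (if E u j then x $ j else 0))"
    unfolding matrix_vector_mult_def by (simp, rule sum.cong) (auto simp: signless_laplacian_def algebra_simps)
  then show ?thesis by (simp add: sum.distrib sum.inter_filter[symmetric])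
qed

lemma eigenvalue_le_deg_add_two_degree_div:
  fixes E :: "'a::finite \<Rightarrow> 'a \<Rightarrow> bool"
  assumes cg: "connected_graph E" and n2: "CARD('a) \<ge> 2"
    and eigen: "signless_laplacian E *v x = c *\<^sub>R x" and "x \<noteq> 0"
  shows "\<exists>u. c \<le> real (deg E u) + two_degree E u / real (deg E u)"
proof -
  define d where "d w = real (deg E w)" for w
  have d: "d w \<ge> 1" for w using deg_ge_1_if_connected[OF cg n2] by (simp add: d_def)
  define r where "r w = \<bar>x $ w\<bar> / d w" for w
  obtain u where "r u = Max (range r)" by (metis Max_in finite UNIV_not_empty finite_imageI imageE image_is_empty)
  then have r_le: "r w \<le> r u" for w by simp
  have x_le: "\<bar>x $ w\<bar> \<le> d w * r u" for w
  proof -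
    have "\<bar>x $ w\<bar> = d w * r w" using d[of w] by (simp add: r_def)
    also have "\<dots> \<le> d w * r u" using d[of w] r_le[of w] by (simp add: mult_left_mono)
    finally show ?thesis .
  qed
  have "\<bar>x $ u\<bar> > 0"
  proof (rule ccontr)
    assume "\<not> \<bar>x $ u\<bar> > 0"
    then have "x $ w = 0" for w using x_le[of w] by (simp add: r_def)
    then show False using \<open>x \<noteq> 0\<close> by (simp add: vec_eq_iff)
  qed
  have "(c - d u) * x $ u = (\<Sum>v\<in>{v. E u v}. x $ v)"
    using signless_laplacian_mult_vec_nth[of E x u] eigen by (simp add: d_def algebra_simps)
  then have "\<bar>c - d u\<bar> * \<bar>x $ u\<bar> \<le> (\<Sum>v\<in>{v. E u v}. \<bar>x $ v\<bar>)"
    by (metis abs_mult sum_abs)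
  also have "\<dots> \<le> (\<Sum>v\<in>{v. E u v}. d v * r u)" by (rule sum_mono) (rule x_le)
  also have "\<dots> = (two_degree E u / d u) * \<bar>x $ u\<bar>"
    by (simp add: two_degree_def d_def sum_distrib_right sum_divide_distrib r_def)
  finally have "\<bar>c - d u\<bar> \<le> two_degree E u / d u"
    using \<open>\<bar>x $ u\<bar> > 0\<close> by (rule mult_right_le_imp_le)
  then have "c \<le> d u + two_degree E u / d u" by linarith
  then show ?thesis unfolding d_def by blast
qed

lemma q_index_le_vertex_bound:
  fixes E :: "'a::finite \<Rightarrow> 'a \<Rightarrow> bool"
  assumes sg: "simple_graph E" and cg: "connected_graph E" and n2: "CARD('a) \<ge> 2"
    and bound: "\<And>u. real (deg E u) + two_degree E u / real (deg E u) \<le> B"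
  shows "q_index E \<le> B"
  unfolding q_index_def
proof (subst Max_le_iff)
  note sym = transpose_signless_laplacian[OF sg]
  show "finite (eigenvalues (signless_laplacian E))" by (rule finite_eigenvalues_symmetric[OF sym])
  show "eigenvalues (signless_laplacian E) \<noteq> {}" by (rule eigenvalues_symmetric_nonempty[OF sym])
  show "\<forall>c\<in>eigenvalues (signless_laplacian E). c \<le> B"
  proof
    fix c assume "c \<in> eigenvalues (signless_laplacian E)"
    then obtain x where "x \<noteq> 0" "signless_laplacian E *v x = c *\<^sub>R x"
      unfolding eigenvalues_def by blast
    then show "c \<le> B"
      using eigenvalue_le_deg_add_two_degree_div[OF cg n2] bound by (meson order_trans)
  qed
qed

lemma add_divide_le_of_bounds:
  fixes d s C k :: real
  assumes "1 \<le> d" "d \<le> k" "s \<le> C" "s \<le> d * k"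
  shows "d + s / d \<le> C / k + k"
proof -
  have "k * d * d + k * s \<le> d * C + d * k * k"
  proof (cases "d * k \<le> C")
    case True
    have "k * s \<le> k * (d * k)" "d * (d * k) \<le> d * C"
      using True assms by (auto intro: mult_left_mono)
    then show ?thesis by (simp add: algebra_simps)
  next
    case False
    have "(d * k - C) * (k - d) \<ge> 0" "k * s \<le> k * C"
      using False assms by (auto intro: mult_nonneg_nonneg mult_left_mono)
    then show ?thesis by (simp add: algebra_simps)
  qed
  moreover have "d * k > 0" using assms by simp
  ultimately show ?thesis using assms by (simp add: field_simps)
qed

lemma q_index_le:
  fixes E :: "'a::finite \<Rightarrow> 'a \<Rightarrow> bool"
  defines "k \<equiv> real CARD('a) - 1"
  defines "C \<equiv> 2 * real (card (edges E)) - k"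
  assumes sg: "simple_graph E" and cg: "connected_graph E" and n2: "CARD('a) \<ge> 2"
  shows "q_index E \<le> C / k + k"
proof (rule q_index_le_vertex_bound[OF sg cg n2], rule add_divide_le_of_bounds)
  fix u
  show "1 \<le> real (deg E u)" using deg_ge_1_if_connected[OF cg n2] by simp
  show "real (deg E u) \<le> k" unfolding k_def by (rule deg_le_card_minus_1[OF sg])
  show "two_degree E u \<le> C" unfolding C_def k_def by (rule two_degree_le_edges[OF sg cg n2])
  show "two_degree E u \<le> real (deg E u) * k" unfolding k_def by (rule two_degree_le_deg_mult[OF sg])
qed

subsection \<open>The Randic index\<close>

text \<open>Tangent line of the convex function \<open>1/\<surd>w\<close> at \<open>w = C\<close>.\<close>

lemma tangent_le_inverse_sqrt:
  fixes w C :: real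
  assumes "w > 0" "C > 0"
  shows "(3 * C - w) / (2 * C * sqrt C) \<le> 1 / sqrt w"
proof -
  define a b where "a = sqrt w" and "b = sqrt C"
  have "a > 0" "b > 0" using assms by (simp_all add: a_def b_def)
  have "(a - b)\<^sup>2 * (a + 2 * b) \<ge> 0" using \<open>a > 0\<close> \<open>b > 0\<close> by simp
  then have "a * (3 * b\<^sup>2 - a\<^sup>2) \<le> 2 * b\<^sup>2 * b"
    by (simp add: algebra_simps power2_eq_square)
  then have "(3 * b\<^sup>2 - a\<^sup>2) / (2 * b\<^sup>2 * b) \<le> 1 / a"
    using \<open>a > 0\<close> \<open>b > 0\<close> by (simp add: field_simps)
  then show ?thesis using assms by (simp add: a_def b_def)
qed

lemma sum_edges_deg_prod_le:
  fixes E :: "'a::finite \<Rightarrow> 'a \<Rightarrow> bool"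
  assumes sg: "simple_graph E" and two_degree_le: "\<And>u. two_degree E u \<le> C"
  shows "(\<Sum>e\<in>edges E. \<Prod>x\<in>e. real (deg E x)) \<le> C * real (card (edges E))"
proof -
  define d where "d x = real (deg E x)" for x
  have "2 * (\<Sum>e\<in>edges E. \<Prod>x\<in>e. d x) = (\<Sum>u\<in>UNIV. \<Sum>v\<in>{v. E u v}. d u * d v)"
  proof (rule sum_arcs_eq_twice_sum_edges[OF sg, symmetric])
    fix u v assume "E u v"
    then have "u \<noteq> v" using sg by (auto simp: simple_graph_def)
    then show "d u * d v = (\<Prod>x\<in>{u, v}. d x)" by simp
  qed
  also have "\<dots> = (\<Sum>u\<in>UNIV. d u * two_degree E u)"
    by (simp add: two_degree_def d_def sum_distrib_left)
  also have "\<dots> \<le> (\<Sum>u\<in>UNIV. d u * C)"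
    using two_degree_le by (intro sum_mono mult_left_mono) (simp_all add: d_def)
  also have "\<dots> = 2 * C * real (card (edges E))"
    using sum_deg_eq_twice_card_edges[OF sg] by (simp add: sum_distrib_right[symmetric] d_def)
  finally show ?thesis by (simp add: d_def)
qed

lemma randic_ge:
  fixes E :: "'a::finite \<Rightarrow> 'a \<Rightarrow> bool"
  assumes sg: "simple_graph E" and cg: "connected_graph E" and n2: "CARD('a) \<ge> 2"
    and "C > 0" and two_degree_le: "\<And>u. two_degree E u \<le> C"
  shows "real (card (edges E)) / sqrt C \<le> randic E"
proof -
  define m where "m = real (card (edges E))"
  define w where "w e = (\<Prod>x\<in>e. real (deg E x))" for e
  have "w e > 0" for e
    unfolding w_def using deg_ge_1_if_connected[OF cg n2] by (intro prod_pos) (simp add: Suc_le_lessD)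
  have "m / sqrt C = (3 * C * m - C * m) / (2 * C * sqrt C)"
    using \<open>C > 0\<close> by (simp add: field_simps)
  also have "\<dots> \<le> (3 * C * m - (\<Sum>e\<in>edges E. w e)) / (2 * C * sqrt C)"
    using sum_edges_deg_prod_le[OF sg two_degree_le] \<open>C > 0\<close>
    by (intro divide_right_mono) (simp_all add: w_def m_def)
  also have "\<dots> = (\<Sum>e\<in>edges E. (3 * C - w e) / (2 * C * sqrt C))"
    by (simp add: sum_divide_distrib[symmetric] sum_subtractf m_def)
  also have "\<dots> \<le> (\<Sum>e\<in>edges E. 1 / sqrt (w e))"
    using \<open>\<And>e. w e > 0\<close> \<open>C > 0\<close> by (intro sum_mono tangent_le_inverse_sqrt)
  finally show ?thesis by (simp add: randic_def w_def m_def)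
qed

subsection \<open>A polynomial inequality\<close>

lemma concave_quadratic_pos_between:
  fixes c p r a b x :: real
  defines "g \<equiv> \<lambda>y. p * y + r - c * y\<^sup>2"
  assumes "c \<ge> 0" "a \<le> x" "x \<le> b" "a < b" "g a > 0" "g b > 0"
  shows "g x > 0"
proof -
  have interpolation: "g x * (b - a) = (b - x) * g a + (x - a) * g b + c * (x - a) * (b - x) * (b - a)"
    unfolding g_def by (simp add: algebra_simps power2_eq_square)
  have "(b - x) * g a + (x - a) * g b > 0"
    using assms by (cases "x = b") (auto intro: add_pos_nonneg add_nonneg_pos)
  moreover have "c * (x - a) * (b - x) * (b - a) \<ge> 0" using assms by simp
  ultimately have "g x * (b - a) > 0" unfolding interpolation by linarith
  then show ?thesis using \<open>a < b\<close> by (simp add: zero_less_mult_iff)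
qed

text \<open>The difference of the two sides factors as \<open>(m - k) g(m)\<close> with \<open>g\<close> a concave quadratic in
\<open>m\<close>, positive at both ends \<open>m = k + 9\<close> and \<open>m = k (k + 1) / 2\<close> of the admissible range; the
values there are displayed as polynomials in \<open>k - 14\<close> with positive coefficients.\<close>

lemma degree_edge_polynomial_ineq:
  fixes k m :: real
  assumes k: "k \<ge> 14" and "k + 9 \<le> m" and "m \<le> k * (k + 1) / 2"
  shows "(2 * m + k * (k - 1))\<^sup>2 * (2 * m - k) < k * (k + 1)\<^sup>2 * m\<^sup>2"
proof -
  define g where "g y = k * (k - 1) * (k - 5) * y + - (k\<^sup>2 * (k - 1)\<^sup>2) - 8 * y\<^sup>2" for y
  define t where "t = k - 14"
  have "t \<ge> 0" using k by (simp add: t_def)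
  have "g (k + 9) = 318 + 1217 * t + 152 * t\<^sup>2 + 5 * t ^ 3"
    unfolding g_def t_def by (simp add: algebra_simps power2_eq_square power3_eq_cube)
  then have "g (k + 9) > 0" using \<open>t \<ge> 0\<close> by (simp add: add_pos_nonneg)
  have "g (k * (k + 1) / 2) = k\<^sup>2 / 2 * (517 + 275 * t + 31 * t\<^sup>2 + t ^ 3)"
    unfolding g_def t_def by (simp add: field_simps power2_eq_square power3_eq_cube)
  moreover have "k\<^sup>2 / 2 * (517 + 275 * t + 31 * t\<^sup>2 + t ^ 3) > 0"
    using \<open>t \<ge> 0\<close> k by (intro mult_pos_pos) (simp_all add: add_pos_nonneg)
  ultimately have "g (k * (k + 1) / 2) > 0" by simp
  have "14 * k \<le> k * k" using k by (intro mult_right_mono) auto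
  then have "k + 18 < k * k" using k by linarith
  then have "k + 9 < k * (k + 1) / 2" by (simp add: field_simps ring_distribs)
  then have "g m > 0"
    using assms \<open>g (k + 9) > 0\<close> \<open>g (k * (k + 1) / 2) > 0\<close>
      concave_quadratic_pos_between[where c = 8 and a = "k + 9" and x = m and b = "k * (k + 1) / 2"
        and p = "k * (k - 1) * (k - 5)" and r = "- (k\<^sup>2 * (k - 1)\<^sup>2)"]
    unfolding g_def by simp
  moreover have "k * (k + 1)\<^sup>2 * m\<^sup>2 - (2 * m + k * (k - 1))\<^sup>2 * (2 * m - k) = (m - k) * g m"
    unfolding g_def by (simp add: algebra_simps power2_eq_square power3_eq_cube)
  moreover have "m - k > 0" using assms by simp
  ultimately show ?thesis by (smt (verit) mult_pos_pos)
qed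

lemma degree_edge_ratio_ineq:
  fixes k m :: real
  defines "C \<equiv> 2 * m - k"
  assumes k: "k \<ge> 14" and "k + 9 \<le> m" and "m \<le> k * (k + 1) / 2"
  shows "(C / k + k) * sqrt C / m < (k + 1) / sqrt k"
proof -
  have "C > 0" "m > 0" using assms by simp_all
  have "((C / k + k) * sqrt C * sqrt k)\<^sup>2 = (C / k + k)\<^sup>2 * C * k"
    using k \<open>C > 0\<close> by (simp add: power_mult_distrib)
  also have "\<dots> = (2 * m + k * (k - 1))\<^sup>2 * (2 * m - k) / k"
    using k by (simp add: C_def field_simps power2_eq_square)
  also have "\<dots> < (k + 1)\<^sup>2 * m\<^sup>2"
    using degree_edge_polynomial_ineq[OF assms(2-4)] k by (simp add: field_simps)
  also have "\<dots> = ((k + 1) * m)\<^sup>2" by (simp add: power_mult_distrib)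
  finally have "(C / k + k) * sqrt C * sqrt k < (k + 1) * m"
    by (rule power2_less_imp_less) (use \<open>m > 0\<close> k in simp)
  moreover have "sqrt k > 0" using k by simp
  ultimately show ?thesis using \<open>m > 0\<close> by (simp add: field_simps)
qed

theorem lemma3p1:
  fixes E :: "'a::finite \<Rightarrow> 'a \<Rightarrow> bool"
  defines "n \<equiv> CARD('a)"
  defines "m \<equiv> card (edges E)"
  assumes "simple_graph E"
    and "connected_graph E"
    and "n \<ge> 15"
    and "n + 8 \<le> m"
    and "real m \<le> 2 * real n powr (3/2)"
    and "m \<le> n choose 2"
  shows "q_index E / randic E < real n / sqrt (real n - 1)"
proof -
  note sg = assms(3) and cg = assms(4)
  define k where "k = real n - 1"
  define C where "C = 2 * real m - k"
  have n2: "CARD('a) \<ge> 2" using assms(5) by (simp add: n_def)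
  have k: "k \<ge> 14" "k + 9 \<le> real m" using assms(5,6) by (simp_all add: k_def)
  have "real (n choose 2) = real (n - 1) * real n / 2"
    by (auto simp add: choose_two field_char_0_class.of_nat_div mod_eq_0_iff_dvd)
  then have "real m \<le> k * (k + 1) / 2"
    using assms(5,8) by (simp add: k_def of_nat_diff flip: of_nat_le_iff)
  have "C > 0" using k by (simp add: C_def)
  have "q_index E \<le> C / k + k"
    using q_index_le[OF sg cg n2] by (simp add: C_def k_def m_def n_def)
  moreover have "real m / sqrt C \<le> randic E"
    using randic_ge[OF sg cg n2 \<open>C > 0\<close>] two_degree_le_edges[OF sg cg n2]
    by (simp add: C_def k_def m_def n_def)
  moreover have "0 < real m / sqrt C" "0 \<le> C / k + k" using k \<open>C > 0\<close> by simp_all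
  ultimately have "q_index E / randic E \<le> (C / k + k) * sqrt C / real m"
    using frac_le[of "C / k + k" "q_index E" "real m / sqrt C" "randic E"] by simp
  also have "\<dots> < (k + 1) / sqrt k"
    unfolding C_def by (rule degree_edge_ratio_ineq) fact+
  finally show ?thesis by (simp add: k_def)
qed

end
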